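(* Let $G$ be a connected graph with vertex set $\{u_1,\dots,u_n\}$, $n\ge2$, and let $\mathcal{H}=\{H_1,\dots,H_n\}$ be a family of graphs. Then $\dim_l(G\circ\mathcal{H})=\operatorname{adim}_l(G\circ\mathcal{H})$ if and only if $\varrho(G,\mathcal{H})=\varrho'(G,\mathcal{H})$.
   Context: All graphs are finite and simple with at least one vertex. $d_G$ is shortest-path distance ($+\infty$ between components), $d_{G,2}=\min\{d_G,2\}$; $s$ distinguishes $x,y$ w.r.t. $d$ if $d(s,x)\ne d(s,y)$. $\dim_l(G)$: minimum size of $S\subseteq V(G)$ such that any two adjacent vertices are distinguished w.r.t. $d_G$ by a vertex of $S$. $\operatorname{adim}_l(G)$: same with $d_{G,2}$ in place of $d_G$; minimum such sets are local adjacency bases. $\Phi$: edgeless graphs. $\mathcal{G}$: class of graphs $H$ such that every local adjacency basis $B$ of $H$ satisfies $B\subseteq N_H(v)$ for some $v$. True twins: $N[x]=N[y]$; let $U_1,\dots,U_k$ be the non-singleton true twin classes of $G$ and $T(G)=\bigcup_jU_j$. Lexicographic product $G\circ\mathcal{H}$: vertex set $\bigcup_i\{u_i\}\times V(H_i)$, $(u_i,v)\sim(u_j,w)$ iff $u_iu_j\in E(G)$, or $i=j$ and $vw\in E(H_i)$. $V_E=\{u_i\in V(G)-T(G): H_i\in\Phi\}$; $I=\{u_i: H_i\in\mathcal{G}\}$; for each $j$ with $I\cap U_j\ne\emptyset$ choose one vertex of $I\cap U_j$ and let $I'_j$ be the remaining vertices ($I'_j=\emptyset$ otherwise); $X_E=I-\bigcup_jI'_j$.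 Relation $\mathcal{R}$ (resp. $\mathcal{R}'$) on $X_E$: $u_i\sim u_j$ and $d_G(u,u_i)=d_G(u,u_j)$ (resp. $d_{G,2}(u,u_i)=d_{G,2}(u,u_j)$) for all $u\in V(G)-(V_E\cup\{u_i,u_j\})$. $\varrho(G,\mathcal{H})$ (resp. $\varrho'(G,\mathcal{H})$) is the minimum $|A|$ over $A\subseteq X_E$ such that every pair in $X_E$ satisfying $\mathcal{R}$ (resp. $\mathcal{R}'$) is distinguished by a vertex of $A$ w.r.t. $d_G$ (resp. $d_{G,2}$). *)

theory Defs
  imports Main "HOL-Library.Extended_Nat"
begin

definition graph :: "'a set \<Rightarrow> ('a \<Rightarrow> 'a \<Rightarrow> bool) \<Rightarrow> bool" where
  "graph V E \<longleftrightarrow> finite V \<and> V \<noteq> {} \<and> (\<forall>x y. E x y \<longrightarrow> x \<in> V \<and> y \<in> V)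
     \<and> (\<forall>x y. E x y \<longrightarrow> E y x) \<and> (\<forall>x. \<not> E x x)"

text \<open>Shortest-path distance; infinity between different components.\<close>
definition gdist :: "'a set \<Rightarrow> ('a \<Rightarrow> 'a \<Rightarrow> bool) \<Rightarrow> 'a \<Rightarrow> 'a \<Rightarrow> enat" where
  "gdist V E x y = (INF n \<in> {n. \<exists>p. length p = Suc n \<and> hd p = x \<and> last p = y \<and> set p \<subseteq> V
        \<and> (\<forall>i<n. E (p ! i) (p ! Suc i))}. enat n)"

definition dist2 :: "'a set \<Rightarrow> ('a \<Rightarrow> 'a \<Rightarrow> bool) \<Rightarrow> 'a \<Rightarrow> 'a \<Rightarrow> enat" where
  "dist2 V E x y = min (gdist V E x y) 2"

definition connected_graph :: "'a set \<Rightarrow> ('a \<Rightarrow> 'a \<Rightarrow> bool) \<Rightarrow> bool" where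
  "connected_graph V E \<longleftrightarrow> graph V E \<and> (\<forall>x\<in>V. \<forall>y\<in>V. gdist V E x y \<noteq> \<infinity>)"

definition local_res :: "('a \<Rightarrow> 'a \<Rightarrow> enat) \<Rightarrow> 'a set \<Rightarrow> ('a \<Rightarrow> 'a \<Rightarrow> bool) \<Rightarrow> 'a set \<Rightarrow> bool" where
  "local_res d V E S \<longleftrightarrow> S \<subseteq> V \<and> (\<forall>x y. E x y \<longrightarrow> (\<exists>s\<in>S. d s x \<noteq> d s y))"

definition ldim :: "('a \<Rightarrow> 'a \<Rightarrow> enat) \<Rightarrow> 'a set \<Rightarrow> ('a \<Rightarrow> 'a \<Rightarrow> bool) \<Rightarrow> nat" where
  "ldim d V E = Min (card ` {S. local_res d V E S})"

definition dim_l :: "'a set \<Rightarrow> ('a \<Rightarrow> 'a \<Rightarrow> bool) \<Rightarrow> nat" where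
  "dim_l V E = ldim (gdist V E) V E"

definition adim_l :: "'a set \<Rightarrow> ('a \<Rightarrow> 'a \<Rightarrow> bool) \<Rightarrow> nat" where
  "adim_l V E = ldim (dist2 V E) V E"

definition local_adj_basis :: "'a set \<Rightarrow> ('a \<Rightarrow> 'a \<Rightarrow> bool) \<Rightarrow> 'a set \<Rightarrow> bool" where
  "local_adj_basis V E B \<longleftrightarrow> local_res (dist2 V E) V E B \<and> card B = adim_l V E"

definition nbhd :: "('a \<Rightarrow> 'a \<Rightarrow> bool) \<Rightarrow> 'a \<Rightarrow> 'a set" where
  "nbhd E v = {w. E v w}"

definition cnbhd :: "('a \<Rightarrow> 'a \<Rightarrow> bool) \<Rightarrow> 'a \<Rightarrow> 'a set" where
  "cnbhd E v = insert v (nbhd E v)"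

definition in_class_G :: "'a set \<Rightarrow> ('a \<Rightarrow> 'a \<Rightarrow> bool) \<Rightarrow> bool" where
  "in_class_G V E \<longleftrightarrow> (\<forall>B. local_adj_basis V E B \<longrightarrow> (\<exists>v\<in>V. B \<subseteq> nbhd E v))"

definition edgeless :: "'a set \<Rightarrow> ('a \<Rightarrow> 'a \<Rightarrow> bool) \<Rightarrow> bool" where
  "edgeless V E \<longleftrightarrow> (\<forall>x y. \<not> E x y)"

definition twin_classes :: "'a set \<Rightarrow> ('a \<Rightarrow> 'a \<Rightarrow> bool) \<Rightarrow> 'a set set" where
  "twin_classes V E = {U. \<exists>x\<in>V. U = {y\<in>V. cnbhd E y = cnbhd E x} \<and> 2 \<le> card U}"

definition twin_set :: "'a set \<Rightarrow> ('a \<Rightarrow> 'a \<Rightarrow> bool) \<Rightarrow> 'a set" where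
  "twin_set V E = \<Union> (twin_classes V E)"

text \<open>Lexicographic product G \<circ> \<H>, H_u = (HV u, HE u).\<close>
definition lex_V :: "'a set \<Rightarrow> ('a \<Rightarrow> 'b set) \<Rightarrow> ('a \<times> 'b) set" where
  "lex_V V HV = Sigma V HV"

definition lex_E :: "'a set \<Rightarrow> ('a \<Rightarrow> 'a \<Rightarrow> bool) \<Rightarrow> ('a \<Rightarrow> 'b set) \<Rightarrow> ('a \<Rightarrow> 'b \<Rightarrow> 'b \<Rightarrow> bool)
     \<Rightarrow> ('a \<times> 'b) \<Rightarrow> ('a \<times> 'b) \<Rightarrow> bool" where
  "lex_E V E HV HE p q \<longleftrightarrow> p \<in> Sigma V HV \<and> q \<in> Sigma V HV \<and>
     (E (fst p) (fst q) \<or> (fst p = fst q \<and> HE (fst p) (snd p) (snd q)))"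

definition V_E :: "'a set \<Rightarrow> ('a \<Rightarrow> 'a \<Rightarrow> bool) \<Rightarrow> ('a \<Rightarrow> 'b set) \<Rightarrow> ('a \<Rightarrow> 'b \<Rightarrow> 'b \<Rightarrow> bool) \<Rightarrow> 'a set" where
  "V_E V E HV HE = {u \<in> V - twin_set V E. edgeless (HV u) (HE u)}"

definition I_set :: "'a set \<Rightarrow> ('a \<Rightarrow> 'b set) \<Rightarrow> ('a \<Rightarrow> 'b \<Rightarrow> 'b \<Rightarrow> bool) \<Rightarrow> 'a set" where
  "I_set V HV HE = {u \<in> V. in_class_G (HV u) (HE u)}"

text \<open>X is a possible X_E: X = I minus the union of the I'_j, for some choice of one
representative of each nonempty I \<inter> U_j.\<close>
definition XE_choice :: "'a set \<Rightarrow> ('a \<Rightarrow> 'a \<Rightarrow> bool) \<Rightarrow> ('a \<Rightarrow> 'b set) \<Rightarrow> ('a \<Rightarrow> 'b \<Rightarrow> 'b \<Rightarrow> bool)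
     \<Rightarrow> 'a set \<Rightarrow> bool" where
  "XE_choice V E HV HE X \<longleftrightarrow> X \<subseteq> I_set V HV HE \<and> I_set V HV HE - twin_set V E \<subseteq> X \<and>
     (\<forall>U\<in>twin_classes V E. I_set V HV HE \<inter> U \<noteq> {} \<longrightarrow> card (X \<inter> U) = 1)"

definition relR :: "('a \<Rightarrow> 'a \<Rightarrow> enat) \<Rightarrow> 'a set \<Rightarrow> ('a \<Rightarrow> 'a \<Rightarrow> bool) \<Rightarrow> 'a set \<Rightarrow> 'a set
     \<Rightarrow> 'a \<Rightarrow> 'a \<Rightarrow> bool" where
  "relR d V E VE X ui uj \<longleftrightarrow> ui \<in> X \<and> uj \<in> X \<and> E ui uj \<and>
     (\<forall>u\<in>V - (VE \<union> {ui, uj}). d u ui = d u uj)"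

definition rho_gen :: "('a \<Rightarrow> 'a \<Rightarrow> enat) \<Rightarrow> 'a set \<Rightarrow> ('a \<Rightarrow> 'a \<Rightarrow> bool) \<Rightarrow> 'a set \<Rightarrow> 'a set \<Rightarrow> nat" where
  "rho_gen d V E VE X = Min (card ` {A. A \<subseteq> X \<and>
     (\<forall>ui uj. relR d V E VE X ui uj \<longrightarrow> (\<exists>a\<in>A. d a ui \<noteq> d a uj))})"

definition rho :: "'a set \<Rightarrow> ('a \<Rightarrow> 'a \<Rightarrow> bool) \<Rightarrow> ('a \<Rightarrow> 'b set) \<Rightarrow> ('a \<Rightarrow> 'b \<Rightarrow> 'b \<Rightarrow> bool)
     \<Rightarrow> 'a set \<Rightarrow> nat" where
  "rho V E HV HE X = rho_gen (gdist V E) V E (V_E V E HV HE) X"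

definition rho' :: "'a set \<Rightarrow> ('a \<Rightarrow> 'a \<Rightarrow> bool) \<Rightarrow> ('a \<Rightarrow> 'b set) \<Rightarrow> ('a \<Rightarrow> 'b \<Rightarrow> 'b \<Rightarrow> bool)
     \<Rightarrow> 'a set \<Rightarrow> nat" where
  "rho' V E HV HE X = rho_gen (dist2 V E) V E (V_E V E HV HE) X"

end

theory Submission
  imports Defs
begin

text \<open>For \<open>d = d\<^sub>G\<close> as well as for \<open>d = d\<^sub>G\<^sub>,\<^sub>2\<close> the local \<open>d\<close>-dimension of \<open>G \<circ> \<H>\<close> equals
  \<open>\<Sum>\<^sub>i adim\<^sub>l(H\<^sub>i) + |I - X\<^sub>E| + \<varrho>\<^sub>d(G, \<H>)\<close>; since the first two terms do not depend on \<open>d\<close>,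
  the two dimensions agree iff \<open>\<varrho> = \<varrho>'\<close>. Because \<open>G\<close> is connected with at least two vertices,
  distances in the product are \<open>d\<^sub>H\<^sub>,\<^sub>2\<close> inside a fibre and \<open>d(u\<^sub>i, u\<^sub>j)\<close> between fibres,
  so the formula can be proved once for an abstract base distance.

  Lower bound: a resolving set \<open>S\<close> meets every fibre in a local adjacency resolving set of \<open>H\<^sub>i\<close>.
  Call \<open>u\<^sub>i \<in> I\<close> an excess vertex if its fibre carries more than \<open>adim\<^sub>l(H\<^sub>i)\<close> vertices of \<open>S\<close>.
  At a non-excess vertex the fibre lies in an open neighbourhood of \<open>H\<^sub>i\<close>, so an edge between
  two such fibres must be resolved from a third fibre; hence no two non-excess vertices are twins,
  and the excess vertices of \<open>X\<^sub>E\<close>, together with the representatives of twin classes lying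
  entirely among the excess vertices, form a \<open>\<varrho>\<close>-feasible set. Counting twin classes gives the
  bound. Upper bound: take a \<open>\<varrho>\<close>-optimal set \<open>A\<close> and, in every fibre, a local adjacency basis of
  \<open>H\<^sub>i\<close>, enlarged by one vertex over \<open>A \<union> (I - X\<^sub>E)\<close> so that it escapes all open neighbourhoods.\<close>

section \<open>Walks and distances\<close>

definition has_walk :: "'a set \<Rightarrow> ('a \<Rightarrow> 'a \<Rightarrow> bool) \<Rightarrow> 'a \<Rightarrow> 'a \<Rightarrow> nat \<Rightarrow> bool" where
  "has_walk V E x y n \<longleftrightarrow> (\<exists>p. length p = Suc n \<and> hd p = x \<and> last p = y \<and> set p \<subseteq> V
        \<and> (\<forall>i<n. E (p ! i) (p ! Suc i)))"

lemma gdist_eq_INF_walk: "gdist V E x y = (INF n \<in> {n. has_walk V E x y n}. enat n)"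
  unfolding gdist_def has_walk_def by simp

lemma has_walk_0: "x \<in> V \<Longrightarrow> has_walk V E x x 0"
  unfolding has_walk_def by (rule exI[of _ "[x]"]) auto

lemma has_walk_0_eq: "has_walk V E x y 0 \<Longrightarrow> x = y"
  unfolding has_walk_def by (auto simp: length_Suc_conv)

lemma has_walk_in_V: "has_walk V E x y n \<Longrightarrow> x \<in> V \<and> y \<in> V"
proof -
  assume "has_walk V E x y n"
  then obtain p where "length p = Suc n" "hd p = x" "last p = y" "set p \<subseteq> V"
    unfolding has_walk_def by blast
  moreover have "p \<noteq> []" using \<open>length p = Suc n\<close> by auto
  ultimately show ?thesis by auto
qed

lemma has_walk_snoc:
  assumes "has_walk V E x y n" "E y z" "z \<in> V"
  shows "has_walk V E x z (Suc n)"
proof -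
  obtain p where p: "length p = Suc n" "hd p = x" "last p = y" "set p \<subseteq> V"
    "\<forall>i<n. E (p ! i) (p ! Suc i)" using assms(1) unfolding has_walk_def by blast
  have "p ! n = y" using p(1,3) last_conv_nth[of p] by fastforce
  then have "\<forall>i<Suc n. E ((p @ [z]) ! i) ((p @ [z]) ! Suc i)"
    using p(1,5) assms(2) by (auto simp: nth_append less_Suc_eq)
  moreover have "hd (p @ [z]) = x" using p(1,2) by (cases p) auto
  ultimately show ?thesis unfolding has_walk_def using p(1,4) assms(3)
    by (intro exI[of _ "p @ [z]"]) auto
qed

lemma has_walk_Cons:
  assumes "has_walk V E y z n" "E x y" "x \<in> V"
  shows "has_walk V E x z (Suc n)"
proof -
  obtain p where p: "length p = Suc n" "hd p = y" "last p = z" "set p \<subseteq> V"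
    "\<forall>i<n. E (p ! i) (p ! Suc i)" using assms(1) unfolding has_walk_def by blast
  have "p ! 0 = y" using p(1,2) by (cases p) auto
  have "E ((x # p) ! i) ((x # p) ! Suc i)" if "i < Suc n" for i
  proof (cases i)
    case (Suc j)
    then show ?thesis using p(5) that by simp
  qed (use \<open>p ! 0 = y\<close> assms(2) in simp)
  moreover have "last (x # p) = z" using p(1,3) by (cases p) auto
  ultimately show ?thesis unfolding has_walk_def using p(1,4) assms(3)
    by (intro exI[of _ "x # p"]) auto
qed

lemma has_walk_SucE:
  assumes "has_walk V E x z (Suc n)"
  obtains y where "has_walk V E x y n" "E y z"
proof -
  obtain p where p: "length p = Suc (Suc n)" "hd p = x" "last p = z" "set p \<subseteq> V"
    "\<forall>i<Suc n. E (p ! i) (p ! Suc i)" using assms unfolding has_walk_def by blast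
  define q where "q = butlast p"
  have q: "length q = Suc n" using p(1) by (simp add: q_def)
  then have "q \<noteq> []" "p \<noteq> []" using p(1) by auto
  have "hd q = x" using p(1,2) \<open>q \<noteq> []\<close> \<open>p \<noteq> []\<close> unfolding q_def
    by (simp add: hd_conv_nth nth_butlast)
  moreover have "set q \<subseteq> V" using p(4) in_set_butlastD unfolding q_def by fast
  moreover have "\<forall>i<n. E (q ! i) (q ! Suc i)" using p(5) q unfolding q_def
    by (simp add: nth_butlast)
  moreover have "E (last q) z"
  proof -
    have "last q = p ! n" using q \<open>q \<noteq> []\<close> unfolding q_def
      by (simp add: last_conv_nth nth_butlast)
    moreover have "z = p ! Suc n" using p(1,3) \<open>p \<noteq> []\<close> by (simp add: last_conv_nth)
    ultimately show ?thesis using p(5) by simp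
  qed
  ultimately show ?thesis using q that unfolding has_walk_def by blast
qed

lemma has_walk_1_iff: "has_walk V E x y 1 \<longleftrightarrow> E x y \<and> x \<in> V \<and> y \<in> V"
proof
  assume w: "has_walk V E x y 1"
  then have "has_walk V E x y (Suc 0)" by simp
  then obtain w where "has_walk V E x w 0" "E w y" by (rule has_walk_SucE)
  then have "E x y" by (auto dest: has_walk_0_eq)
  then show "E x y \<and> x \<in> V \<and> y \<in> V" using has_walk_in_V[OF w] by simp
next
  assume "E x y \<and> x \<in> V \<and> y \<in> V"
  then show "has_walk V E x y 1" using has_walk_snoc[OF has_walk_0, of x V E y] by simp
qed

lemma has_walk_rev:
  assumes sym: "\<And>a b. E a b \<Longrightarrow> E b a"
  shows "has_walk V E x y n \<Longrightarrow> has_walk V E y x n"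
proof (induction n arbitrary: y)
  case 0
  then have "x = y" by (rule has_walk_0_eq)
  then show ?case using 0 by simp
next
  case (Suc n)
  obtain w where "has_walk V E x w n" "E w y" using Suc.prems by (rule has_walk_SucE)
  moreover have "y \<in> V" using has_walk_in_V[OF Suc.prems] by simp
  ultimately show ?case using Suc.IH sym by (blast intro: has_walk_Cons)
qed

lemma gdist_le_walk: "has_walk V E x y n \<Longrightarrow> gdist V E x y \<le> enat n"
  unfolding gdist_eq_INF_walk by (rule INF_lower) simp

lemma gdist_greatest: "(\<And>n. has_walk V E x y n \<Longrightarrow> k \<le> enat n) \<Longrightarrow> k \<le> gdist V E x y"
  unfolding gdist_eq_INF_walk by (rule INF_greatest) simp

lemma gdist_finite_obtains_walk:
  assumes "gdist V E x y \<noteq> \<infinity>"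
  obtains n where "gdist V E x y = enat n" "has_walk V E x y n"
proof -
  have "\<exists>n. has_walk V E x y n"
  proof (rule ccontr)
    assume "\<nexists>n. has_walk V E x y n"
    then have "gdist V E x y = (INF n \<in> {}. enat n)" unfolding gdist_eq_INF_walk by simp
    then show False using assms by (simp add: top_enat_def)
  qed
  then have w: "has_walk V E x y (LEAST n. has_walk V E x y n)" by (rule LeastI_ex)
  have "gdist V E x y = enat (LEAST n. has_walk V E x y n)"
    by (intro antisym gdist_le_walk[OF w] gdist_greatest) (simp add: Least_le)
  then show ?thesis using w that by blast
qed

lemma gdist_commute:
  assumes "\<And>a b. E a b \<Longrightarrow> E b a"
  shows "gdist V E x y = gdist V E y x"
proof -
  have "gdist V E a b \<le> gdist V E b a" for a b
    by (rule gdist_greatest, rule gdist_le_walk, rule has_walk_rev[OF assms])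
  then show ?thesis by (metis antisym)
qed

lemma gdist_self: "x \<in> V \<Longrightarrow> gdist V E x x = 0"
  using gdist_le_walk[OF has_walk_0[of x V E]] by (simp add: zero_enat_def[symmetric])

lemma gdist_adjacent:
  assumes "E x y" "x \<in> V" "y \<in> V" "x \<noteq> y"
  shows "gdist V E x y = 1"
proof (rule antisym)
  show "gdist V E x y \<le> 1"
    using gdist_le_walk[of V E x y 1] has_walk_1_iff[of V E x y] assms by (simp add: one_enat_def)
  show "1 \<le> gdist V E x y"
  proof (rule gdist_greatest)
    fix n assume "has_walk V E x y n"
    then have "n \<noteq> 0" using assms(4) by (cases n) (auto dest: has_walk_0_eq)
    then show "1 \<le> enat n" by (simp add: one_enat_def)
  qed
qed

lemma gdist_ge_2:
  assumes "\<not> E x y" "x \<noteq> y"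
  shows "2 \<le> gdist V E x y"
proof (rule gdist_greatest)
  fix n assume w: "has_walk V E x y n"
  have "n \<noteq> 0" using w assms(2) by (cases n) (auto dest: has_walk_0_eq)
  moreover have "n \<noteq> 1" using w assms(1) has_walk_1_iff by metis
  ultimately show "2 \<le> enat n" by (simp add: numeral_eq_enat)
qed

lemma gdist_snoc_le:
  assumes "E y z" "z \<in> V"
  shows "gdist V E x z \<le> gdist V E x y + 1"
proof (cases "gdist V E x y = \<infinity>")
  case False
  then obtain n where "gdist V E x y = enat n" "has_walk V E x y n"
    by (rule gdist_finite_obtains_walk)
  then show ?thesis using gdist_le_walk[OF has_walk_snoc] assms
    by (simp add: eSuc_enat[symmetric] plus_1_eSuc)
qed simp

lemma graph_sym: "graph V E \<Longrightarrow> E x y \<Longrightarrow> E y x" unfolding graph_def by blast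
lemma graph_irrefl: "graph V E \<Longrightarrow> \<not> E x x" unfolding graph_def by blast
lemma graph_edge_in_V: "graph V E \<Longrightarrow> E x y \<Longrightarrow> x \<in> V \<and> y \<in> V" unfolding graph_def by blast

lemma gdist_graph_adjacent: "graph V E \<Longrightarrow> E x y \<Longrightarrow> gdist V E x y = 1"
  by (metis gdist_adjacent graph_edge_in_V graph_irrefl)

lemma dist2_graph:
  assumes "graph V E" "x \<in> V" "y \<in> V"
  shows "dist2 V E x y = (if x = y then 0 else if E x y then 1 else 2)"
  using gdist_self[OF assms(2)] gdist_graph_adjacent[OF assms(1)] gdist_ge_2[of E x y V]
  by (auto simp: dist2_def min_absorb2)

lemma gdist_twin_le:
  assumes G: "graph V E" and twin: "cnbhd E u = cnbhd E u'" and "z \<noteq> u'"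
  shows "gdist V E z u \<le> gdist V E z u'"
proof (rule gdist_greatest)
  fix n assume w: "has_walk V E z u' n"
  show "gdist V E z u \<le> enat n"
  proof (cases n)
    case 0 then show ?thesis using w assms(3) by (auto dest: has_walk_0_eq)
  next
    case (Suc k)
    then obtain y where y: "has_walk V E z y k" "E y u'" using w has_walk_SucE by metis
    show ?thesis
    proof (cases "y = u")
      case True
      then show ?thesis using gdist_le_walk[OF y(1)] Suc by (simp add: order_trans)
    next
      case False
      have "y \<in> cnbhd E u" using twin graph_sym[OF G y(2)] unfolding cnbhd_def nbhd_def by auto
      then have "E y u" using False graph_sym[OF G] unfolding cnbhd_def nbhd_def by auto
      then have "has_walk V E z u (Suc k)" using has_walk_snoc[OF y(1)] graph_edge_in_V[OF G] by simp
      then show ?thesis using Suc by (simp add: gdist_le_walk)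
    qed
  qed
qed

lemma gdist_twin:
  "graph V E \<Longrightarrow> cnbhd E u = cnbhd E u' \<Longrightarrow> z \<noteq> u \<Longrightarrow> z \<noteq> u' \<Longrightarrow> gdist V E z u = gdist V E z u'"
  by (metis antisym gdist_twin_le)

section \<open>Distances in the lexicographic product\<close>

lemma lex_E_iff: "lex_E V E HV HE (u,v) (u',w) \<longleftrightarrow>
   u \<in> V \<and> v \<in> HV u \<and> u' \<in> V \<and> w \<in> HV u' \<and> (E u u' \<or> (u = u' \<and> HE u v w))"
  unfolding lex_E_def by auto

lemma gdist_fst_le_lex_walk:
  "has_walk (Sigma V HV) (lex_E V E HV HE) p q n \<Longrightarrow> gdist V E (fst p) (fst q) \<le> enat n"
proof (induction n arbitrary: q)
  case 0
  then have "p = q" by (rule has_walk_0_eq)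
  moreover have "fst p \<in> V" using has_walk_in_V[OF 0] by auto
  ultimately show ?case using gdist_self[of "fst p" V E] by (simp add: zero_enat_def)
next
  case (Suc n)
  obtain r where r: "has_walk (Sigma V HV) (lex_E V E HV HE) p r n" "lex_E V E HV HE r q"
    using Suc.prems by (rule has_walk_SucE)
  have IH: "gdist V E (fst p) (fst r) \<le> enat n" using Suc.IH[OF r(1)] .
  have "fst q \<in> V" "fst r = fst q \<or> E (fst r) (fst q)" using r(2) unfolding lex_E_def by auto
  then show ?case
  proof (elim disjE)
    assume "fst r = fst q"
    then show ?thesis using IH order_trans by fastforce
  next
    assume "E (fst r) (fst q)"
    then have "gdist V E (fst p) (fst q) \<le> gdist V E (fst p) (fst r) + 1"
      using \<open>fst q \<in> V\<close> by (rule gdist_snoc_le)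
    also have "\<dots> \<le> enat (Suc n)" using IH by (simp add: eSuc_enat[symmetric] plus_1_eSuc)
    finally show ?thesis .
  qed
qed

lemma lex_walk_of_walk:
  assumes "\<forall>u\<in>V. HV u \<noteq> {}"
  shows "has_walk V E u y (Suc n) \<Longrightarrow> v \<in> HV u \<Longrightarrow> t \<in> HV y \<Longrightarrow>
    has_walk (Sigma V HV) (lex_E V E HV HE) (u,v) (y,t) (Suc n)"
proof (induction n arbitrary: y t)
  case 0
  then have "E u y" "u \<in> V" "y \<in> V" using has_walk_1_iff[of V E u y] by simp_all
  then show ?case using 0 has_walk_1_iff[of "Sigma V HV" "lex_E V E HV HE" "(u,v)" "(y,t)"]
    by (simp add: lex_E_iff)
next
  case (Suc n)
  obtain y' where y': "has_walk V E u y' (Suc n)" "E y' y" using Suc.prems(1) by (rule has_walk_SucE)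
  have "y' \<in> V" "y \<in> V" using has_walk_in_V[OF y'(1)] has_walk_in_V[OF Suc.prems(1)] by simp_all
  then obtain t' where t': "t' \<in> HV y'" using assms by blast
  show ?case
  proof (rule has_walk_snoc)
    show "has_walk (Sigma V HV) (lex_E V E HV HE) (u,v) (y',t') (Suc n)"
      using Suc.IH[OF y'(1) Suc.prems(2) t'] .
    show "lex_E V E HV HE (y',t') (y,t)" "(y,t) \<in> Sigma V HV"
      using \<open>y' \<in> V\<close> \<open>y \<in> V\<close> t' Suc.prems(3) y'(2) by (simp_all add: lex_E_iff)
  qed
qed

lemma gdist_lex_other_fibre:
  assumes "\<forall>u\<in>V. HV u \<noteq> {}"
    and "u \<noteq> u'" "u \<in> V" "v \<in> HV u" "u' \<in> V" "w \<in> HV u'"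
  shows "gdist (Sigma V HV) (lex_E V E HV HE) (u,v) (u',w) = gdist V E u u'"
proof (rule antisym)
  show "gdist V E u u' \<le> gdist (Sigma V HV) (lex_E V E HV HE) (u,v) (u',w)"
    using gdist_greatest gdist_fst_le_lex_walk by fastforce
  show "gdist (Sigma V HV) (lex_E V E HV HE) (u,v) (u',w) \<le> gdist V E u u'"
  proof (cases "gdist V E u u' = \<infinity>")
    case False
    then obtain n where n: "gdist V E u u' = enat n" "has_walk V E u u' n"
      by (rule gdist_finite_obtains_walk)
    then obtain m where "n = Suc m" using assms(2) by (cases n) (auto dest: has_walk_0_eq)
    then show ?thesis using gdist_le_walk[OF lex_walk_of_walk] assms n by simp
  qed simp
qed

lemma gdist_lex_same_fibre:
  assumes G: "graph V E" and H: "graph (HV u) (HE u)" and ne: "HV u' \<noteq> {}"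
    and "v \<in> HV u" "w \<in> HV u" "E u u'"
  shows "gdist (Sigma V HV) (lex_E V E HV HE) (u,v) (u,w) = dist2 (HV u) (HE u) v w"
proof -
  have u: "u \<in> V" "u' \<in> V" using graph_edge_in_V[OF G assms(6)] by auto
  consider "v = w" | "HE u v w" | "v \<noteq> w" "\<not> HE u v w" by blast
  then show ?thesis
  proof cases
    case 1
    then show ?thesis
      using gdist_self[of "(u,w)" "Sigma V HV" "lex_E V E HV HE"] assms u dist2_graph[OF H] by simp
  next
    case 2
    then have "v \<noteq> w" using graph_irrefl[OF H] by blast
    then have "gdist (Sigma V HV) (lex_E V E HV HE) (u,v) (u,w) = 1"
      using 2 assms u by (intro gdist_adjacent) (auto simp: lex_E_iff)
    then show ?thesis using 2 \<open>v \<noteq> w\<close> assms dist2_graph[OF H] by simp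
  next
    case 3
    have "\<not> lex_E V E HV HE (u,v) (u,w)" using 3 graph_irrefl[OF G] by (simp add: lex_E_iff)
    then have ge: "2 \<le> gdist (Sigma V HV) (lex_E V E HV HE) (u,v) (u,w)"
      using 3 by (intro gdist_ge_2) auto
    \<comment> \<open>a detour through any vertex of the adjacent fibre has length 2\<close>
    obtain t where t: "t \<in> HV u'" using ne by blast
    have "has_walk (Sigma V HV) (lex_E V E HV HE) (u,v) (u',t) 1"
      by (rule has_walk_1_iff[THEN iffD2]) (use assms u t in \<open>simp add: lex_E_iff\<close>)
    then have "has_walk (Sigma V HV) (lex_E V E HV HE) (u,v) (u,w) (Suc 1)"
      by (rule has_walk_snoc) (use assms u t graph_sym[OF G] in \<open>auto simp: lex_E_iff\<close>)
    then have "gdist (Sigma V HV) (lex_E V E HV HE) (u,v) (u,w) \<le> 2"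
      using gdist_le_walk by (simp add: numeral_eq_enat numeral_2_eq_2)
    then show ?thesis using ge 3 dist2_graph[OF H] assms by simp
  qed
qed

lemma connected_graph_obtains_neighbour:
  assumes "connected_graph V E" "card V \<ge> 2" "u \<in> V"
  obtains u' where "E u u'"
proof -
  have G: "graph V E" using assms(1) unfolding connected_graph_def by simp
  have "\<not> V \<subseteq> {u}" using assms(2) card_mono[of "{u}" V] by auto
  then obtain u' where u': "u' \<in> V" "u' \<noteq> u" by blast
  have "gdist V E u' u \<noteq> \<infinity>" using assms(1,3) u'(1) unfolding connected_graph_def by blast
  then obtain n where n: "has_walk V E u' u n" by (rule gdist_finite_obtains_walk)
  then obtain m where "n = Suc m" using u'(2) by (cases n) (auto dest: has_walk_0_eq)
  then obtain y where "E y u" using n by (auto elim: has_walk_SucE)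
  then show ?thesis using graph_sym[OF G] that by blast
qed

lemma gdist_lex:
  assumes "connected_graph V E" "card V \<ge> 2" "\<forall>u\<in>V. graph (HV u) (HE u)"
    and "z \<in> V" "t \<in> HV z" "u \<in> V" "v \<in> HV u"
  shows "gdist (lex_V V HV) (lex_E V E HV HE) (z,t) (u,v) =
    (if z = u then dist2 (HV u) (HE u) t v else gdist V E z u)"
proof -
  have G: "graph V E" using assms(1) unfolding connected_graph_def by simp
  have ne: "\<forall>u\<in>V. HV u \<noteq> {}" using assms(3) unfolding graph_def by blast
  show ?thesis
  proof (cases "z = u")
    case True
    obtain u' where u': "E u u'" using connected_graph_obtains_neighbour assms(1,2,6) .
    then have "HV u' \<noteq> {}" using ne graph_edge_in_V[OF G u'] by blast
    moreover have "graph (HV u) (HE u)" using assms(3,6) by blast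
    ultimately show ?thesis using gdist_lex_same_fibre[OF G _ _ _ _ u'] assms(5,7) True
      unfolding lex_V_def by simp
  qed (use gdist_lex_other_fibre[OF ne] assms in \<open>simp add: lex_V_def\<close>)
qed

lemma Min_card_le:
  assumes "finite W" "\<And>A. P A \<Longrightarrow> A \<subseteq> W" "P A"
  shows "Min (card ` {A. P A}) \<le> card A"
proof -
  have "{A. P A} \<subseteq> Pow W" using assms(2) by blast
  then have "finite {A. P A}" using assms(1) by (simp add: finite_subset)
  then show ?thesis using assms(3) by simp
qed

lemma Min_card_obtains:
  assumes "finite W" "\<And>A. P A \<Longrightarrow> A \<subseteq> W" "P A"
  obtains A' where "P A'" "card A' = Min (card ` {A. P A})"
proof -
  have "{A. P A} \<subseteq> Pow W" using assms(2) by blast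
  then have "finite {A. P A}" using assms(1) by (simp add: finite_subset)
  moreover have "card ` {A. P A} \<noteq> {}" using assms(3) by blast
  ultimately have "Min (card ` {A. P A}) \<in> card ` {A. P A}" by (simp add: Min_in)
  then show ?thesis using that by (auto simp del: Min_in)
qed

lemma ldim_le: "finite V \<Longrightarrow> local_res d V E S \<Longrightarrow> ldim d V E \<le> card S"
  unfolding ldim_def by (rule Min_card_le) (auto simp: local_res_def)

lemma ldim_obtains:
  assumes "finite V" "local_res d V E S"
  obtains S' where "local_res d V E S'" "card S' = ldim d V E"
  using Min_card_obtains[of V "local_res d V E", OF assms(1) _ assms(2)]
  unfolding ldim_def local_res_def by blast

definition rho_feasible ::
    "('a \<Rightarrow> 'a \<Rightarrow> enat) \<Rightarrow> 'a set \<Rightarrow> ('a \<Rightarrow> 'a \<Rightarrow> bool) \<Rightarrow> 'a set \<Rightarrow> 'a set \<Rightarrow> 'a set \<Rightarrow> bool" where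
  "rho_feasible d V E VE X A \<longleftrightarrow>
     A \<subseteq> X \<and> (\<forall>ui uj. relR d V E VE X ui uj \<longrightarrow> (\<exists>a\<in>A. d a ui \<noteq> d a uj))"

lemma rho_gen_eq_Min: "rho_gen d V E VE X = Min (card ` {A. rho_feasible d V E VE X A})"
  unfolding rho_gen_def rho_feasible_def ..

lemma rho_gen_le: "finite X \<Longrightarrow> rho_feasible d V E VE X A \<Longrightarrow> rho_gen d V E VE X \<le> card A"
  unfolding rho_gen_eq_Min by (rule Min_card_le) (auto simp: rho_feasible_def)

lemma rho_gen_obtains:
  assumes "finite X" "rho_feasible d V E VE X A"
  obtains A' where "rho_feasible d V E VE X A'" "card A' = rho_gen d V E VE X"
  using Min_card_obtains[of X "rho_feasible d V E VE X", OF assms(1) _ assms(2)]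
  unfolding rho_gen_eq_Min rho_feasible_def by blast

lemma sum_add_indicator:
  assumes "finite V" "J \<subseteq> V"
  shows "(\<Sum>u\<in>V. f u + (if u \<in> J then 1 else 0)) = sum f V + card J"
proof -
  have "(\<Sum>u\<in>V. if u \<in> J then 1 else 0) = card (V \<inter> J)"
    using sum.inter_restrict[OF assms(1), of "\<lambda>_. 1::nat" J, symmetric] by simp
  then show ?thesis using assms(2) by (simp add: sum.distrib Int_absorb1)
qed

section \<open>An abstract base distance\<close>

text \<open>The base distance \<open>dG\<close> stands for either \<open>d\<^sub>G\<close> or \<open>d\<^sub>G\<^sub>,\<^sub>2\<close>, and \<open>dP\<close> for the
  corresponding distance of the lexicographic product; the assumptions are the properties of
  the pair that the argument uses.\<close>
locale lex_distances =
  fixes V :: "'a set" and E :: "'a \<Rightarrow> 'a \<Rightarrow> bool"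
    and HV :: "'a \<Rightarrow> 'b set" and HE :: "'a \<Rightarrow> 'b \<Rightarrow> 'b \<Rightarrow> bool"
    and X :: "'a set" and dG :: "'a \<Rightarrow> 'a \<Rightarrow> enat" and dP :: "'a \<times> 'b \<Rightarrow> 'a \<times> 'b \<Rightarrow> enat"
  assumes graph_G: "graph V E"
    and graph_H: "\<forall>u\<in>V. graph (HV u) (HE u)"
    and XE: "XE_choice V E HV HE X"
    and dP_lex: "\<And>z t u v. z \<in> V \<Longrightarrow> t \<in> HV z \<Longrightarrow> u \<in> V \<Longrightarrow> v \<in> HV u \<Longrightarrow>
       dP (z,t) (u,v) = (if z = u then dist2 (HV u) (HE u) t v else dG z u)"
    and dG_adjacent: "\<And>x y. E x y \<Longrightarrow> dG x y = 1"
    and dG_self: "\<And>x. x \<in> V \<Longrightarrow> dG x x = 0"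
    and dG_commute: "\<And>x y. dG x y = dG y x"
    and dG_twin: "\<And>u u' z. cnbhd E u = cnbhd E u' \<Longrightarrow> z \<noteq> u \<Longrightarrow> z \<noteq> u' \<Longrightarrow> dG z u = dG z u'"
begin

abbreviation "PV \<equiv> lex_V V HV"
abbreviation "PE \<equiv> lex_E V E HV HE"
abbreviation "Iset \<equiv> I_set V HV HE"
abbreviation "Tset \<equiv> twin_set V E"
abbreviation "VE \<equiv> V_E V E HV HE"
abbreviation "adimH u \<equiv> adim_l (HV u) (HE u)"
abbreviation "resolvesH u B \<equiv> local_res (dist2 (HV u) (HE u)) (HV u) (HE u) B"
abbreviation "escapes u B \<equiv> \<forall>v\<in>HV u. \<not> B \<subseteq> nbhd (HE u) v"

lemma finite_V: "finite V" using graph_G unfolding graph_def by simp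
lemma graph_HV: "u \<in> V \<Longrightarrow> graph (HV u) (HE u)" using graph_H by blast
lemma finite_HV: "u \<in> V \<Longrightarrow> finite (HV u)" using graph_HV unfolding graph_def by blast
lemma HV_nonempty: "u \<in> V \<Longrightarrow> HV u \<noteq> {}" using graph_HV unfolding graph_def by blast
lemma PV_eq: "PV = Sigma V HV" unfolding lex_V_def ..
lemma finite_PV: "finite PV" unfolding PV_eq using finite_V finite_HV by blast

lemma dist2_H: "u \<in> V \<Longrightarrow> t \<in> HV u \<Longrightarrow> v \<in> HV u \<Longrightarrow>
   dist2 (HV u) (HE u) t v = (if t = v then 0 else if HE u t v then 1 else 2)"
  using dist2_graph[OF graph_HV] by blast

lemma dist2_H_nbhd:
  assumes "u \<in> V" "v \<in> HV u" "t \<in> nbhd (HE u) v"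
  shows "dist2 (HV u) (HE u) t v = 1"
proof -
  have e: "HE u v t" using assms(3) unfolding nbhd_def by simp
  then have "t \<in> HV u" "t \<noteq> v" "HE u t v"
    using graph_edge_in_V graph_irrefl graph_sym graph_HV[OF assms(1)] by fast+
  then show ?thesis using dist2_H[OF assms(1) _ assms(2)] by simp
qed

lemma dist2_H_not_nbhd:
  assumes "u \<in> V" "v \<in> HV u" "t \<in> HV u" "t \<notin> nbhd (HE u) v"
  shows "dist2 (HV u) (HE u) t v \<noteq> 1"
proof -
  have "\<not> HE u t v" using assms(4) graph_sym[OF graph_HV[OF assms(1)]] unfolding nbhd_def by blast
  then show ?thesis using dist2_H[OF assms(1) assms(3) assms(2)] by simp
qed

lemma resolvesH_HV: assumes "u \<in> V" shows "resolvesH u (HV u)"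
  unfolding local_res_def
proof (intro conjI subset_refl allI impI)
  fix x y assume e: "HE u x y"
  then have "x \<in> HV u" "y \<in> HV u" "x \<noteq> y"
    using graph_edge_in_V graph_irrefl graph_HV[OF assms] by fast+
  then show "\<exists>s\<in>HV u. dist2 (HV u) (HE u) s x \<noteq> dist2 (HV u) (HE u) s y"
    using dist2_H[OF assms] e by (intro bexI[of _ x]) auto
qed

lemma adimH_le: "u \<in> V \<Longrightarrow> resolvesH u B \<Longrightarrow> adimH u \<le> card B"
  unfolding adim_l_def using ldim_le finite_HV by blast

lemma adimH_obtains:
  assumes "u \<in> V" obtains B where "resolvesH u B" "card B = adimH u"
  unfolding adim_l_def using ldim_obtains[OF finite_HV resolvesH_HV, OF assms assms] by blast

lemma resolvesH_subset: "resolvesH u B \<Longrightarrow> B \<subseteq> HV u" unfolding local_res_def by simp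

lemma in_I_basis_in_nbhd:
  "u \<in> Iset \<Longrightarrow> resolvesH u B \<Longrightarrow> card B = adimH u \<Longrightarrow> \<exists>v\<in>HV u. B \<subseteq> nbhd (HE u) v"
  unfolding I_set_def in_class_G_def local_adj_basis_def by blast

lemma not_in_I_escaping_basis:
  "u \<in> V \<Longrightarrow> u \<notin> Iset \<Longrightarrow> \<exists>B. resolvesH u B \<and> card B = adimH u \<and> escapes u B"
  unfolding I_set_def in_class_G_def local_adj_basis_def by blast

text \<open>For \<open>u \<in> I\<close> a basis lies in some \<open>N(v)\<close>; adding \<open>v\<close> makes it escape every neighbourhood,
  since \<open>v\<close> and a vertex \<open>x\<close> with \<open>B \<union> {v} \<subseteq> N(x)\<close> would be adjacent yet not
  distinguished by \<open>B\<close>.\<close>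
lemma in_I_escaping_set:
  assumes "u \<in> Iset"
  shows "\<exists>B. resolvesH u B \<and> card B = adimH u + 1 \<and> escapes u B"
proof -
  have u: "u \<in> V" using assms unfolding I_set_def by simp
  obtain B0 where B0: "resolvesH u B0" "card B0 = adimH u" using adimH_obtains[OF u] .
  then obtain v where v: "v \<in> HV u" "B0 \<subseteq> nbhd (HE u) v" using in_I_basis_in_nbhd assms by blast
  have "v \<notin> B0" using v(2) graph_irrefl[OF graph_HV[OF u]] unfolding nbhd_def by blast
  moreover have "finite B0" using resolvesH_subset[OF B0(1)] finite_HV[OF u] by (rule finite_subset)
  moreover have "resolvesH u (insert v B0)" using B0(1) v(1) unfolding local_res_def by blast
  moreover have "escapes u (insert v B0)"
  proof (intro ballI notI)
    fix x assume x: "x \<in> HV u" "insert v B0 \<subseteq> nbhd (HE u) x"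
    then have "HE u v x" using graph_sym[OF graph_HV[OF u]] unfolding nbhd_def by blast
    then obtain s where s: "s \<in> B0" "dist2 (HV u) (HE u) s v \<noteq> dist2 (HV u) (HE u) s x"
      using B0(1) unfolding local_res_def by blast
    then show False using v x dist2_H_nbhd[OF u] by (metis insert_subset subsetD)
  qed
  ultimately show ?thesis using B0(2) by (intro exI[of _ "insert v B0"]) simp
qed

lemma edgeless_adimH: "u \<in> V \<Longrightarrow> edgeless (HV u) (HE u) \<Longrightarrow> adimH u = 0"
  using adimH_le[of u "{}"] unfolding local_res_def edgeless_def by simp

lemma edgeless_in_I: assumes "u \<in> V" "edgeless (HV u) (HE u)" shows "u \<in> Iset"
proof -
  have "B = {}" if "local_adj_basis (HV u) (HE u) B" for B
    using that edgeless_adimH[OF assms] finite_HV[OF assms(1)] finite_subset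
    unfolding local_adj_basis_def local_res_def by (metis card_0_eq)
  then show ?thesis using assms HV_nonempty unfolding I_set_def in_class_G_def by blast
qed

lemma resolvesH_empty_edgeless: "resolvesH u {} \<Longrightarrow> edgeless (HV u) (HE u)"
  unfolding local_res_def edgeless_def by simp

definition twins :: "'a \<Rightarrow> 'a \<Rightarrow> bool" where
  "twins u u' \<longleftrightarrow> u \<in> V \<and> u' \<in> V \<and> cnbhd E u = cnbhd E u'"

lemma twins_sym: "twins u u' \<Longrightarrow> twins u' u" unfolding twins_def by simp
lemma twins_trans: "twins u u' \<Longrightarrow> twins u' u'' \<Longrightarrow> twins u u''" unfolding twins_def by simp
lemma twins_refl: "u \<in> V \<Longrightarrow> twins u u" unfolding twins_def by simp
lemma twins_in_V: "twins u u' \<Longrightarrow> u \<in> V \<and> u' \<in> V" unfolding twins_def by simp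

lemma twins_dG: "twins u u' \<Longrightarrow> z \<noteq> u \<Longrightarrow> z \<noteq> u' \<Longrightarrow> dG z u = dG z u'"
  using dG_twin unfolding twins_def by blast

lemma twins_adjacent: assumes "twins x y" "x \<noteq> y" shows "E x y"
proof -
  have "x \<in> cnbhd E y" using assms(1) unfolding twins_def cnbhd_def by auto
  then show ?thesis using assms(2) graph_sym[OF graph_G] unfolding cnbhd_def nbhd_def by auto
qed

lemma twins_adjacent_to: assumes "twins a a'" "z \<noteq> a'" "E a z" shows "E a' z"
proof -
  have "z \<in> cnbhd E a'" using assms(1,3) unfolding twins_def cnbhd_def nbhd_def by auto
  then show ?thesis using assms(2) unfolding cnbhd_def nbhd_def by simp
qed

lemma twins_edge: assumes "twins a a'" "twins b b'" "E a b" "a' \<noteq> b'" shows "E a' b'"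
proof (cases "a' = b")
  case True
  then show ?thesis using twins_adjacent[OF assms(2)] assms(4) by simp
next
  case False
  then have "E b a'" using twins_adjacent_to[OF assms(1) _ assms(3)] graph_sym[OF graph_G] by blast
  then have "b' = b \<or> E b' a'" using twins_adjacent_to[OF assms(2)] assms(4) by blast
  then show ?thesis using \<open>E b a'\<close> graph_sym[OF graph_G] by blast
qed

lemma twin_class_card:
  assumes "twins z y" "y \<noteq> z"
  shows "2 \<le> card {w\<in>V. cnbhd E w = cnbhd E z}"
proof -
  have "{z, y} \<subseteq> {w\<in>V. cnbhd E w = cnbhd E z}" using assms(1) unfolding twins_def by auto
  moreover have "finite {w\<in>V. cnbhd E w = cnbhd E z}" using finite_V by simp
  ultimately have "card {z, y} \<le> card {w\<in>V. cnbhd E w = cnbhd E z}" by (rule card_mono[rotated])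
  then show ?thesis using assms(2) by simp
qed

lemma twin_set_iff: "z \<in> Tset \<longleftrightarrow> (\<exists>y. twins z y \<and> y \<noteq> z)"
proof
  assume "z \<in> Tset"
  then obtain x where x: "z \<in> {y\<in>V. cnbhd E y = cnbhd E x}"
    "2 \<le> card {y\<in>V. cnbhd E y = cnbhd E x}" unfolding twin_set_def twin_classes_def by blast
  have "\<not> {y\<in>V. cnbhd E y = cnbhd E x} \<subseteq> {z}"
  proof
    assume "{y\<in>V. cnbhd E y = cnbhd E x} \<subseteq> {z}"
    then have "card {y\<in>V. cnbhd E y = cnbhd E x} \<le> 1" using card_mono[of "{z}"] by simp
    then show False using x(2) by simp
  qed
  then show "\<exists>y. twins z y \<and> y \<noteq> z" using x(1) unfolding twins_def by auto
next
  assume "\<exists>y. twins z y \<and> y \<noteq> z"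
  then obtain y where y: "twins z y" "y \<noteq> z" by blast
  have "z \<in> V" using twins_in_V[OF y(1)] by simp
  then show "z \<in> Tset" using twin_class_card[OF y]
    unfolding twin_set_def twin_classes_def by blast
qed

lemma twin_class_in_twin_classes:
  assumes "u \<in> Tset" shows "{y\<in>V. cnbhd E y = cnbhd E u} \<in> twin_classes V E"
proof -
  obtain y where y: "twins u y" "y \<noteq> u" using assms twin_set_iff by blast
  have "u \<in> V" using twins_in_V[OF y(1)] by simp
  then show ?thesis using twin_class_card[OF y] unfolding twin_classes_def by blast
qed

lemma X_subset_I: "X \<subseteq> Iset" using XE unfolding XE_choice_def by simp
lemma I_subset_V: "Iset \<subseteq> V" unfolding I_set_def by auto
lemma X_subset_V: "X \<subseteq> V" using X_subset_I I_subset_V by blast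
lemma I_not_twin_in_X: "u \<in> Iset \<Longrightarrow> u \<notin> Tset \<Longrightarrow> u \<in> X" using XE unfolding XE_choice_def by blast
lemma finite_X: "finite X" using X_subset_V finite_V by (rule finite_subset)
lemma finite_I: "finite Iset" using I_subset_V finite_V by (rule finite_subset)

lemma X_twin_class:
  assumes "u \<in> Iset" "u \<in> Tset"
  obtains x where "X \<inter> {y\<in>V. cnbhd E y = cnbhd E u} = {x}"
proof -
  let ?U = "{y\<in>V. cnbhd E y = cnbhd E u}"
  have "u \<in> ?U" using assms(1) I_subset_V by auto
  then have "Iset \<inter> ?U \<noteq> {}" using assms(1) by blast
  moreover have "?U \<in> twin_classes V E" using twin_class_in_twin_classes[OF assms(2)] .
  ultimately have "card (X \<inter> ?U) = 1" using XE unfolding XE_choice_def by simp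
  then show ?thesis using that by (rule card_1_singletonE)
qed

lemma X_representative: assumes "u \<in> Iset" "u \<in> Tset" obtains x where "x \<in> X" "twins u x"
proof -
  obtain x where "X \<inter> {y\<in>V. cnbhd E y = cnbhd E u} = {x}" using X_twin_class[OF assms] .
  then show ?thesis using that assms(1) I_subset_V unfolding twins_def by blast
qed

lemma X_twins_eq: assumes "x \<in> X" "x' \<in> X" "twins x x'" shows "x = x'"
proof (cases "x \<in> Tset")
  case True
  obtain w where "X \<inter> {y\<in>V. cnbhd E y = cnbhd E x} = {w}"
    using X_twin_class[OF _ True] assms(1) X_subset_I by blast
  moreover have "x \<in> X \<inter> {y\<in>V. cnbhd E y = cnbhd E x}" "x' \<in> X \<inter> {y\<in>V. cnbhd E y = cnbhd E x}"
    using assms unfolding twins_def by auto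
  ultimately show ?thesis by (metis singletonD)
next
  case False
  then show ?thesis using assms(3) twin_set_iff by blast
qed

section \<open>The lower bound\<close>

lemma resolving_subset: "local_res dP PV PE S \<Longrightarrow> S \<subseteq> Sigma V HV"
  unfolding local_res_def PV_eq by simp

lemma fibre_resolvesH:
  assumes S: "local_res dP PV PE S" and u: "u \<in> V"
  shows "resolvesH u (S `` {u})"
  unfolding local_res_def
proof (intro conjI allI impI)
  show "S `` {u} \<subseteq> HV u" using resolving_subset[OF S] by auto
next
  fix x y assume e: "HE u x y"
  then have m: "x \<in> HV u" "y \<in> HV u" using graph_edge_in_V[OF graph_HV[OF u]] by auto
  then have "PE (u,x) (u,y)" using u e by (simp add: lex_E_iff)
  then obtain z t where zt: "(z,t) \<in> S" "dP (z,t) (u,x) \<noteq> dP (z,t) (u,y)"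
    using S unfolding local_res_def by fast
  moreover have "z \<in> V" "t \<in> HV z" using zt(1) resolving_subset[OF S] by auto
  ultimately have "z = u" "dist2 (HV u) (HE u) t x \<noteq> dist2 (HV u) (HE u) t y"
    using dP_lex u m by (auto split: if_splits)
  then show "\<exists>s\<in>S `` {u}. dist2 (HV u) (HE u) s x \<noteq> dist2 (HV u) (HE u) s y"
    using zt(1) by blast
qed

text \<open>Every vertex of \<open>S\<close> within the two fibres is at distance 1 from both ends of the edge.\<close>
lemma resolving_separates_fibres:
  assumes S: "local_res dP PV PE S" and e: "E u u'" and v: "v \<in> HV u" and w: "w \<in> HV u'"
    and Su: "S `` {u} \<subseteq> nbhd (HE u) v" and Su': "S `` {u'} \<subseteq> nbhd (HE u') w"
  shows "\<exists>z t. (z,t) \<in> S \<and> z \<noteq> u \<and> z \<noteq> u' \<and> dG z u \<noteq> dG z u'"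
proof -
  have uV: "u \<in> V" "u' \<in> V" using graph_edge_in_V[OF graph_G e] by auto
  have "u \<noteq> u'" using e graph_irrefl[OF graph_G] by blast
  have "PE (u,v) (u',w)" using uV v w e by (simp add: lex_E_iff)
  then obtain z t where zt: "(z,t) \<in> S" "dP (z,t) (u,v) \<noteq> dP (z,t) (u',w)"
    using S unfolding local_res_def by fast
  have z: "z \<in> V" "t \<in> HV z" using zt(1) resolving_subset[OF S] by auto
  have "z \<noteq> u"
  proof
    assume "z = u"
    then have "dist2 (HV u) (HE u) t v = 1" using Su zt(1) dist2_H_nbhd[OF uV(1) v] by blast
    then show False using zt(2) dP_lex[OF z uV(1) v] dP_lex[OF z uV(2) w] \<open>z = u\<close> \<open>u \<noteq> u'\<close>
      dG_adjacent[OF e] by simp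
  qed
  moreover have "z \<noteq> u'"
  proof
    assume "z = u'"
    then have "dist2 (HV u') (HE u') t w = 1" using Su' zt(1) dist2_H_nbhd[OF uV(2) w] by blast
    then show False using zt(2) dP_lex[OF z uV(1) v] dP_lex[OF z uV(2) w] \<open>z = u'\<close> \<open>u \<noteq> u'\<close>
      dG_adjacent[OF graph_sym[OF graph_G e]] by simp
  qed
  ultimately show ?thesis using zt dP_lex[OF z uV(1) v] dP_lex[OF z uV(2) w] by auto
qed

definition excess :: "('a \<times> 'b) set \<Rightarrow> 'a set" where
  "excess S = {u \<in> Iset. adimH u < card (S `` {u})}"

lemma card_resolving_ge:
  assumes S: "local_res dP PV PE S"
  shows "sum adimH V + card (excess S) \<le> card S"
proof -
  have fin: "finite (S `` {u})" if "u \<in> V" for u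
    using resolvesH_subset[OF fibre_resolvesH[OF S that]] finite_HV[OF that] by (rule finite_subset)
  have "S = Sigma V (\<lambda>u. S `` {u})" using resolving_subset[OF S] by auto
  then have "card S = card (Sigma V (\<lambda>u. S `` {u}))" by (rule arg_cong)
  also have "\<dots> = (\<Sum>u\<in>V. card (S `` {u}))" using finite_V fin by (simp add: card_SigmaI)
  finally have "card S = (\<Sum>u\<in>V. card (S `` {u}))" .
  moreover have "adimH u + (if u \<in> excess S then 1 else 0) \<le> card (S `` {u})" if "u \<in> V" for u
    using adimH_le[OF that fibre_resolvesH[OF S that]] unfolding excess_def by auto
  then have "(\<Sum>u\<in>V. adimH u + (if u \<in> excess S then 1 else 0)) \<le> (\<Sum>u\<in>V. card (S `` {u}))"
    by (rule sum_mono)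
  moreover have "excess S \<subseteq> V" using I_subset_V unfolding excess_def by auto
  ultimately show ?thesis using sum_add_indicator[OF finite_V] by simp
qed

lemma non_excess_separated:
  assumes S: "local_res dP PV PE S" and "u \<in> Iset - excess S" "u' \<in> Iset - excess S" "E u u'"
  shows "\<exists>z t. (z,t) \<in> S \<and> z \<noteq> u \<and> z \<noteq> u' \<and> dG z u \<noteq> dG z u'"
proof -
  have nbhd: "\<exists>v\<in>HV x. S `` {x} \<subseteq> nbhd (HE x) v" if "x \<in> Iset - excess S" for x
  proof -
    have "x \<in> V" using that I_subset_V by auto
    then have "card (S `` {x}) = adimH x"
      using that adimH_le[OF _ fibre_resolvesH[OF S]] unfolding excess_def by force
    then show ?thesis using in_I_basis_in_nbhd fibre_resolvesH[OF S \<open>x \<in> V\<close>] that by blast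
  qed
  obtain v w where "v \<in> HV u" "S `` {u} \<subseteq> nbhd (HE u) v" "w \<in> HV u'" "S `` {u'} \<subseteq> nbhd (HE u') w"
    using nbhd assms(2,3) by blast
  then show ?thesis using resolving_separates_fibres[OF S assms(4)] by blast
qed

lemma non_excess_twins_eq:
  assumes S: "local_res dP PV PE S" and "u \<in> Iset - excess S" "u' \<in> Iset - excess S" "twins u u'"
  shows "u = u'"
proof (rule ccontr)
  assume "u \<noteq> u'"
  then obtain z t where "z \<noteq> u" "z \<noteq> u'" "dG z u \<noteq> dG z u'"
    using non_excess_separated[OF assms(1-3)] twins_adjacent[OF assms(4)] by blast
  then show False using twins_dG[OF assms(4)] by blast
qed

text \<open>The part of \<open>X\<close> that a resolving set forces into a \<open>\<varrho>\<close>-feasible set, \<open>J\<close> being the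
  excess vertices.\<close>
definition rho_witness :: "'a set \<Rightarrow> 'a set" where
  "rho_witness J = (J \<inter> (X - Tset)) \<union> {x \<in> X \<inter> Tset. \<forall>y. twins x y \<longrightarrow> y \<in> Iset \<longrightarrow> y \<in> J}"

lemma rho_witness_subset: "rho_witness J \<subseteq> X"
  unfolding rho_witness_def by auto

lemma rho_witness_subset_J: "rho_witness J \<subseteq> J"
  unfolding rho_witness_def using X_subset_I X_subset_V twins_refl by blast

lemma not_in_rho_witness:
  assumes "x \<in> X" "x \<notin> rho_witness J"
  obtains x' where "x' \<in> Iset" "x' \<notin> J" "twins x x'"
proof (cases "x \<in> J")
  case False
  then show ?thesis using that assms(1) X_subset_I X_subset_V twins_refl by blast
next
  case True
  then have "x \<in> Tset" using assms unfolding rho_witness_def by blast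
  then show ?thesis using that assms unfolding rho_witness_def by blast
qed

lemma rho_witness_twin_in_J:
  assumes "x \<in> rho_witness J" "twins x y" "y \<in> Iset"
  shows "y \<in> J"
proof (cases "x \<in> Tset")
  case False
  then have "y = x" using assms(2) twin_set_iff[of x] by blast
  then show ?thesis using assms(1) rho_witness_subset_J by blast
qed (use assms in \<open>auto simp: rho_witness_def\<close>)

lemma I_minus_X_representative:
  assumes unique: "\<And>u u'. u \<in> Iset - J \<Longrightarrow> u' \<in> Iset - J \<Longrightarrow> twins u u' \<Longrightarrow> u = u'"
    and "y \<in> Iset - X" "y \<notin> J"
  obtains x where "x \<in> X" "twins y x" "x \<in> J"
proof -
  have "y \<in> Tset" using assms(2) I_not_twin_in_X by blast
  then obtain x where x: "x \<in> X" "twins y x" using assms(2) X_representative by blast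
  have "x \<in> J"
  proof (rule ccontr)
    assume "x \<notin> J"
    then have "y = x" using unique[of y x] assms(2,3) x X_subset_I by blast
    then show False using x assms(2) by auto
  qed
  then show ?thesis using that x by blast
qed

text \<open>A vertex of \<open>I - X\<close> outside \<open>J\<close> is sent to its representative in \<open>X\<close>, which lies in \<open>J\<close>.\<close>
lemma rho_witness_injection:
  assumes unique: "\<And>u u'. u \<in> Iset - J \<Longrightarrow> u' \<in> Iset - J \<Longrightarrow> twins u u' \<Longrightarrow> u = u'"
  obtains f where "f ` (rho_witness J \<union> (Iset - X)) \<subseteq> J" "inj_on f (rho_witness J \<union> (Iset - X))"
proof -
  define rep where "rep y = (SOME x. x \<in> X \<and> twins y x \<and> x \<in> J)" for y
  have rep: "rep y \<in> X \<and> twins y (rep y) \<and> rep y \<in> J" if "y \<in> Iset - X" "y \<notin> J" for y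
    unfolding rep_def by (rule someI_ex) (metis I_minus_X_representative[OF unique that])
  define f where "f y = (if y \<in> J then y else rep y)" for y
  let ?D = "rho_witness J \<union> (Iset - X)"
  have not_J: "x \<in> Iset - X" if "x \<in> ?D" "x \<notin> J" for x
    using that rho_witness_subset_J[of J] by auto
  have "f ` ?D \<subseteq> J" using rep not_J unfolding f_def by auto
  moreover have "inj_on f ?D"
  proof (rule inj_onI)
    fix a b assume ab: "a \<in> ?D" "b \<in> ?D" "f a = f b"
    have mixed: False if "a \<in> ?D" "b \<in> ?D" "b \<notin> J" "a = rep b" for a b
    proof -
      have "rep b \<in> X" "twins b (rep b)" using rep[OF not_J[OF that(2,3)] that(3)] by auto
      then have "a \<in> X" "twins a b" using twins_sym[OF \<open>twins b (rep b)\<close>] that(4) by simp_all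
      then have "a \<in> rho_witness J" using that(1) by blast
      then show False using rho_witness_twin_in_J \<open>twins a b\<close> not_J[OF that(2,3)] that(3) by blast
    qed
    show "a = b"
    proof (cases "a \<in> J"; cases "b \<in> J")
      assume "a \<in> J" "b \<in> J"
      then show ?thesis using ab(3) unfolding f_def by simp
    next
      assume "a \<in> J" "b \<notin> J"
      then have "a = rep b" using ab(3) unfolding f_def by simp
      then show ?thesis using mixed[OF ab(1,2) \<open>b \<notin> J\<close>] by blast
    next
      assume "a \<notin> J" "b \<in> J"
      then have "b = rep a" using ab(3) unfolding f_def by simp
      then show ?thesis using mixed[OF ab(2,1) \<open>a \<notin> J\<close>] by blast
    next
      assume "a \<notin> J" "b \<notin> J"
      then have a: "a \<in> Iset - X" and b: "b \<in> Iset - X" using not_J ab(1,2) by auto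
      have "rep a = rep b" using \<open>a \<notin> J\<close> \<open>b \<notin> J\<close> ab(3) unfolding f_def by simp
      moreover have "twins a (rep a)" "twins b (rep b)" using rep a b \<open>a \<notin> J\<close> \<open>b \<notin> J\<close> by blast+
      ultimately have "twins a b" using twins_trans twins_sym by metis
      then show ?thesis using unique a b \<open>a \<notin> J\<close> \<open>b \<notin> J\<close> by blast
    qed
  qed
  ultimately show ?thesis using that by blast
qed

lemma card_rho_witness:
  assumes J: "J \<subseteq> Iset"
    and unique: "\<And>u u'. u \<in> Iset - J \<Longrightarrow> u' \<in> Iset - J \<Longrightarrow> twins u u' \<Longrightarrow> u = u'"
  shows "card (rho_witness J) + card (Iset - X) \<le> card J"
proof -
  let ?D = "rho_witness J \<union> (Iset - X)"
  obtain f where "f ` ?D \<subseteq> J" "inj_on f ?D" using rho_witness_injection[OF unique] by blast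
  then have "card ?D \<le> card J" using card_inj_on_le finite_subset[OF J finite_I] by blast
  moreover have "finite (rho_witness J)" using rho_witness_subset finite_X by (rule finite_subset)
  then have "card ?D = card (rho_witness J) + card (Iset - X)"
    using rho_witness_subset finite_I by (intro card_Un_disjoint) auto
  ultimately show ?thesis by simp
qed

lemma twins_distinction_avoids:
  assumes "twins a a'" "twins b b'" "E a b" "a \<noteq> b'" "z \<noteq> a'" "z \<noteq> b'" "dG z a' \<noteq> dG z b'"
  shows "z \<noteq> a"
proof
  assume "z = a"
  have "a \<in> V" using twins_in_V[OF assms(1)] by simp
  have "E a a'" using twins_adjacent[OF assms(1)] assms(5) \<open>z = a\<close> by simp
  moreover have "E a b'" using twins_edge[OF twins_refl[OF \<open>a \<in> V\<close>] assms(2,3,4)] .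
  ultimately show False using assms(7) \<open>z = a\<close> dG_adjacent by simp
qed

lemma twins_transfer_distinction:
  assumes "twins a a'" "twins b b'" "E a b" "a \<noteq> b'" "b \<noteq> a'"
    and "z \<noteq> a'" "z \<noteq> b'" "dG z a' \<noteq> dG z b'"
  shows "z \<noteq> a" "z \<noteq> b" "dG z a \<noteq> dG z b"
proof -
  show "z \<noteq> a" using twins_distinction_avoids[OF assms(1-4,6-8)] .
  show "z \<noteq> b" using twins_distinction_avoids[OF assms(2,1) graph_sym[OF graph_G assms(3)] assms(5,7,6)]
      assms(8) by metis
  then show "dG z a \<noteq> dG z b"
    using \<open>z \<noteq> a\<close> assms(6-8) twins_dG[OF assms(1)] twins_dG[OF assms(2)] by simp
qed

text \<open>A vertex of \<open>S\<close> in a fibre of \<open>V\<^sub>E\<close>: the factor is edgeless, so \<open>z \<in> I\<close> with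
  \<open>adim_l(H_z) = 0\<close>, and \<open>z\<close> has no twin, so \<open>z \<in> X\<close>.\<close>
lemma VE_fibre_in_rho_witness:
  assumes S: "local_res dP PV PE S" and "(z,t) \<in> S" "z \<in> VE"
  shows "z \<in> rho_witness (excess S)"
proof -
  have "z \<in> V" "z \<notin> Tset" "edgeless (HV z) (HE z)" using assms(3) unfolding V_E_def by auto
  then have "z \<in> Iset" "adimH z = 0" "z \<in> X"
    using edgeless_in_I edgeless_adimH I_not_twin_in_X by auto
  moreover have "finite (S `` {z})"
    using resolvesH_subset[OF fibre_resolvesH[OF S \<open>z \<in> V\<close>]] finite_HV[OF \<open>z \<in> V\<close>]
    by (rule finite_subset)
  then have "card (S `` {z}) > 0" using assms(2) card_gt_0_iff by blast
  ultimately show ?thesis using \<open>z \<notin> Tset\<close> unfolding excess_def rho_witness_def by auto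
qed

lemma X_edge_separated:
  assumes S: "local_res dP PV PE S" and "ui \<in> X - rho_witness (excess S)" "uj \<in> X - rho_witness (excess S)"
    and "E ui uj"
  shows "\<exists>z t. (z,t) \<in> S \<and> z \<noteq> ui \<and> z \<noteq> uj \<and> dG z ui \<noteq> dG z uj"
proof -
  have u: "ui \<in> X" "uj \<in> X" "ui \<noteq> uj" using assms(2-4) graph_irrefl[OF graph_G] by auto
  obtain ui' where ui': "ui' \<in> Iset - excess S" "twins ui ui'"
    using not_in_rho_witness[of ui] assms(2) by blast
  obtain uj' where uj': "uj' \<in> Iset - excess S" "twins uj uj'"
    using not_in_rho_witness[of uj] assms(3) by blast
  have ne: "ui \<noteq> uj'" "uj \<noteq> ui'"
    using X_twins_eq[OF u(2,1)] X_twins_eq[OF u(1,2)] uj'(2) ui'(2) u(3) by blast+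
  have "ui' \<noteq> uj'"
  proof
    assume "ui' = uj'"
    then have "twins ui uj" using twins_trans[OF ui'(2)] twins_sym[OF uj'(2)] by simp
    then show False using X_twins_eq[OF u(1,2)] u(3) by blast
  qed
  then have "E ui' uj'" using twins_edge[OF ui'(2) uj'(2) assms(4)] by blast
  then obtain z t where z: "(z,t) \<in> S" "z \<noteq> ui'" "z \<noteq> uj'" "dG z ui' \<noteq> dG z uj'"
    using non_excess_separated[OF S ui'(1) uj'(1)] by blast
  then show ?thesis using twins_transfer_distinction[OF ui'(2) uj'(2) assms(4) ne z(2-4)] by blast
qed

lemma rho_witness_feasible:
  assumes S: "local_res dP PV PE S"
  shows "rho_feasible dG V E VE X (rho_witness (excess S))"
  unfolding rho_feasible_def
proof (intro conjI rho_witness_subset allI impI)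
  let ?A = "rho_witness (excess S)"
  fix ui uj assume R: "relR dG V E VE X ui uj"
  then have u: "ui \<in> X" "uj \<in> X" "E ui uj" and R': "\<forall>u\<in>V - (VE \<union> {ui, uj}). dG u ui = dG u uj"
    unfolding relR_def by auto
  have "ui \<in> V" "uj \<in> V" using u X_subset_V by auto
  show "\<exists>a\<in>?A. dG a ui \<noteq> dG a uj"
  proof (rule ccontr)
    assume none: "\<not> (\<exists>a\<in>?A. dG a ui \<noteq> dG a uj)"
    have "ui \<notin> ?A" using none dG_self[OF \<open>ui \<in> V\<close>] dG_adjacent[OF u(3)] by force
    moreover have "uj \<notin> ?A"
      using none dG_self[OF \<open>uj \<in> V\<close>] dG_adjacent[OF graph_sym[OF graph_G u(3)]] by force
    ultimately obtain z t where z: "(z,t) \<in> S" "z \<noteq> ui" "z \<noteq> uj" "dG z ui \<noteq> dG z uj"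
      using X_edge_separated[OF S _ _ u(3)] u(1,2) by blast
    then have "z \<in> VE" using R' resolving_subset[OF S] by blast
    then show False using VE_fibre_in_rho_witness[OF S z(1)] none z(4) by blast
  qed
qed

lemma ldim_lower:
  assumes S: "local_res dP PV PE S"
  shows "sum adimH V + card (Iset - X) + rho_gen dG V E VE X \<le> card S"
proof -
  have "card (rho_witness (excess S)) + card (Iset - X) \<le> card (excess S)"
    using non_excess_twins_eq[OF S] by (intro card_rho_witness) (auto simp: excess_def)
  moreover have "rho_gen dG V E VE X \<le> card (rho_witness (excess S))"
    using rho_gen_le[OF finite_X rho_witness_feasible[OF S]] .
  ultimately show ?thesis using card_resolving_ge[OF S] by linarith
qed

section \<open>The upper bound\<close>

lemma twin_of_distinguisher_avoids:
  assumes "twins z y" "y \<noteq> z" "E u u'" "z \<noteq> u'" "dG z u \<noteq> dG z u'"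
  shows "y \<noteq> u"
proof
  assume "y = u"
  then have "E z u" using twins_adjacent[OF assms(1)] assms(2) by simp
  moreover have "twins u z" using twins_sym[OF assms(1)] \<open>y = u\<close> by simp
  then have "E z u'" using twins_adjacent_to assms(3,4) by (metis (full_types))
  ultimately show False using assms(5) dG_adjacent by simp
qed

end

text \<open>The resolving set of the upper bound is \<open>Sigma V B\<close>.\<close>
locale fibre_selection = lex_distances +
  fixes A :: "'a set" and B :: "'a \<Rightarrow> 'b set"
  assumes A_feasible: "rho_feasible dG V E (V_E V E HV HE) X A"
    and B_resolves: "\<And>u. u \<in> V \<Longrightarrow> local_res (dist2 (HV u) (HE u)) (HV u) (HE u) (B u)"
    and card_B: "\<And>u. u \<in> V \<Longrightarrow>
      card (B u) = adim_l (HV u) (HE u) + (if u \<in> A \<union> (I_set V HV HE - X) then 1 else 0)"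
    and B_escapes: "\<And>u. u \<in> V \<Longrightarrow> u \<notin> I_set V HV HE \<or> u \<in> A \<union> (I_set V HV HE - X) \<Longrightarrow>
      \<forall>v\<in>HV u. \<not> B u \<subseteq> nbhd (HE u) v"
begin

lemma A_subset_X: "A \<subseteq> X" using A_feasible unfolding rho_feasible_def by simp

lemma B_subset: "u \<in> V \<Longrightarrow> B u \<subseteq> HV u" using resolvesH_subset[OF B_resolves] .

lemma B_nonempty: assumes "u \<in> V" "u \<notin> Iset \<or> u \<in> A \<union> (Iset - X)" shows "B u \<noteq> {}"
  using B_escapes[OF assms] HV_nonempty[OF assms(1)] by blast

lemma card_Sigma_B: "card (Sigma V B) = sum adimH V + card A + card (Iset - X)"
proof -
  have "finite (B u)" if "u \<in> V" for u using B_subset[OF that] finite_HV[OF that] by (rule finite_subset)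
  then have "card (Sigma V B) = (\<Sum>u\<in>V. adimH u + (if u \<in> A \<union> (Iset - X) then 1 else 0))"
    using card_B finite_V by (simp add: card_SigmaI)
  also have "\<dots> = sum adimH V + card (A \<union> (Iset - X))"
    using A_subset_X X_subset_V I_subset_V by (intro sum_add_indicator finite_V) auto
  also have "card (A \<union> (Iset - X)) = card A + card (Iset - X)"
    using A_subset_X finite_X finite_I by (intro card_Un_disjoint) (auto simp: finite_subset)
  finally show ?thesis by simp
qed

lemma third_fibre_separates:
  assumes "z \<in> V" "z \<noteq> u" "z \<noteq> u'" "B z \<noteq> {}" "dG z u \<noteq> dG z u'"
    and "u \<in> V" "v \<in> HV u" "u' \<in> V" "w \<in> HV u'"
  shows "\<exists>s\<in>Sigma V B. dP s (u,v) \<noteq> dP s (u',w)"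
proof -
  obtain t where "t \<in> B z" using assms(4) by blast
  then have "(z,t) \<in> Sigma V B" "t \<in> HV z" using assms(1) B_subset by auto
  moreover have "dP (z,t) (u,v) \<noteq> dP (z,t) (u',w)"
    using dP_lex[OF assms(1) \<open>t \<in> HV z\<close>] assms by simp
  ultimately show ?thesis by blast
qed

lemma escaping_fibre_separates:
  assumes "E u u'" "v \<in> HV u" "w \<in> HV u'" "\<forall>v\<in>HV u. \<not> B u \<subseteq> nbhd (HE u) v"
  shows "\<exists>s\<in>Sigma V B. dP s (u,v) \<noteq> dP s (u',w)"
proof -
  have u: "u \<in> V" "u' \<in> V" "u \<noteq> u'" using graph_edge_in_V graph_irrefl graph_G assms(1) by metis+
  obtain t where t: "t \<in> B u" "t \<notin> nbhd (HE u) v" using assms(2,4) by blast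
  then have "(u,t) \<in> Sigma V B" "t \<in> HV u" using u B_subset by auto
  moreover have "dP (u,t) (u,v) \<noteq> dP (u,t) (u',w)"
    using dP_lex[OF u(1) \<open>t \<in> HV u\<close>] u assms(2,3) dist2_H_not_nbhd[OF u(1) assms(2) \<open>t \<in> HV u\<close> t(2)]
      dG_adjacent[OF assms(1)] by simp
  ultimately show ?thesis by blast
qed

text \<open>When \<open>\<R>\<close> fails for an edge of \<open>X - A\<close>, some vertex outside \<open>V\<^sub>E\<close> distinguishes its ends;
  if its fibre carries no vertex of the selection, it is an edgeless twin and one of its twins does.\<close>
lemma outside_VE_separates:
  assumes "E u u'" "v \<in> HV u" "w \<in> HV u'"
    and "z \<in> V" "z \<notin> VE" "z \<noteq> u" "z \<noteq> u'" "dG z u \<noteq> dG z u'"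
  shows "\<exists>s\<in>Sigma V B. dP s (u,v) \<noteq> dP s (u',w)"
proof (cases "B z = {}")
  case False
  then show ?thesis using third_fibre_separates assms graph_edge_in_V[OF graph_G assms(1)] by blast
next
  case True
  have u: "u \<in> V" "u' \<in> V" using graph_edge_in_V[OF graph_G assms(1)] by auto
  have "edgeless (HV z) (HE z)" using resolvesH_empty_edgeless B_resolves[OF assms(4)] True by simp
  then have "z \<in> Tset" "z \<in> Iset" using assms(4,5) edgeless_in_I unfolding V_E_def by auto
  moreover have "z \<notin> A \<union> (Iset - X)" using B_nonempty[OF assms(4)] True by blast
  ultimately have "z \<in> X" by blast
  obtain y where y: "twins z y" "y \<noteq> z" using twin_set_iff \<open>z \<in> Tset\<close> by blast
  have "y \<noteq> u" "y \<noteq> u'"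
    using twin_of_distinguisher_avoids[OF y assms(1) assms(7,8)]
      twin_of_distinguisher_avoids[OF y graph_sym[OF graph_G assms(1)] assms(6)] assms(8) by metis+
  have "dG y u = dG z u" "dG y u' = dG z u'"
    using twins_dG[OF y(1)] assms(6,7) \<open>y \<noteq> u\<close> \<open>y \<noteq> u'\<close> dG_commute by metis+
  moreover have "B y \<noteq> {}"
  proof -
    have "y \<in> V" using twins_in_V[OF y(1)] by simp
    moreover have "y \<notin> Iset - (A \<union> (Iset - X))"
      using X_twins_eq[OF \<open>z \<in> X\<close> _ y(1)] y(2) by blast
    ultimately show ?thesis using B_nonempty by blast
  qed
  ultimately show ?thesis
    using third_fibre_separates[of y u u' v w] twins_in_V[OF y(1)] u assms(2,3,8) \<open>y \<noteq> u\<close> \<open>y \<noteq> u'\<close>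
    by simp
qed

lemma same_fibre_separates:
  assumes "u \<in> V" "HE u v w"
  shows "\<exists>s\<in>Sigma V B. dP s (u,v) \<noteq> dP s (u,w)"
proof -
  have "v \<in> HV u" "w \<in> HV u" using graph_edge_in_V[OF graph_HV[OF assms(1)] assms(2)] by auto
  obtain t where t: "t \<in> B u" "dist2 (HV u) (HE u) t v \<noteq> dist2 (HV u) (HE u) t w"
    using B_resolves[OF assms(1)] assms(2) unfolding local_res_def by blast
  then have "(u,t) \<in> Sigma V B" "t \<in> HV u" using assms(1) B_subset by auto
  moreover have "dP (u,t) (u,v) \<noteq> dP (u,t) (u,w)"
    using t(2) dP_lex[OF assms(1) \<open>t \<in> HV u\<close> assms(1)] \<open>v \<in> HV u\<close> \<open>w \<in> HV u\<close> by simp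
  ultimately show ?thesis by blast
qed

lemma adjacent_fibres_separate:
  assumes "E u u'" "v \<in> HV u" "w \<in> HV u'"
  shows "\<exists>s\<in>Sigma V B. dP s (u,v) \<noteq> dP s (u',w)"
proof (cases "u \<in> X - A \<and> u' \<in> X - A")
  case False
  then have "u \<notin> Iset \<or> u \<in> A \<union> (Iset - X) \<or> u' \<notin> Iset \<or> u' \<in> A \<union> (Iset - X)"
    using X_subset_I by blast
  moreover have "u \<in> V" "u' \<in> V" using graph_edge_in_V[OF graph_G assms(1)] by auto
  ultimately show ?thesis
    using escaping_fibre_separates[OF assms] B_escapes
      escaping_fibre_separates[OF graph_sym[OF graph_G assms(1)] assms(3,2)] by metis
next
  case uX: True
  have u: "u \<in> V" "u' \<in> V" using graph_edge_in_V[OF graph_G assms(1)] by auto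
  show ?thesis
  proof (cases "relR dG V E VE X u u'")
    case True
    then obtain a where a: "a \<in> A" "dG a u \<noteq> dG a u'"
      using A_feasible unfolding rho_feasible_def by blast
    then have "a \<in> V" "a \<noteq> u" "a \<noteq> u'" "B a \<noteq> {}"
      using uX A_subset_X X_subset_V B_nonempty by auto
    then show ?thesis using third_fibre_separates a(2) u assms(2,3) by simp
  next
    case False
    then obtain z where "z \<in> V" "z \<notin> VE" "z \<noteq> u" "z \<noteq> u'" "dG z u \<noteq> dG z u'"
      using uX assms(1) unfolding relR_def by blast
    then show ?thesis using outside_VE_separates[OF assms] by simp
  qed
qed

lemma Sigma_B_resolving: "local_res dP PV PE (Sigma V B)"
  unfolding local_res_def
proof (intro conjI allI impI)
  show "Sigma V B \<subseteq> PV" using B_subset unfolding PV_eq by auto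
next
  fix p q assume "PE p q"
  then obtain u v u' w where pq: "p = (u,v)" "q = (u',w)" "u \<in> V" "v \<in> HV u" "w \<in> HV u'"
    and "E u u' \<or> (u = u' \<and> HE u v w)" unfolding lex_E_def by auto
  then show "\<exists>s\<in>Sigma V B. dP s p \<noteq> dP s q"
    using same_fibre_separates adjacent_fibres_separate by auto
qed

end

context lex_distances
begin

lemma fibre_choice_exists:
  assumes "u \<in> V" "J \<subseteq> Iset"
  shows "\<exists>B. resolvesH u B \<and> card B = adimH u + (if u \<in> J then 1 else 0) \<and>
    (u \<notin> Iset \<or> u \<in> J \<longrightarrow> escapes u B)"
proof -
  consider "u \<in> J" | "u \<notin> J" "u \<in> Iset" | "u \<notin> Iset" using assms(2) by blast
  then show ?thesis
  proof cases
    case 1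
    then obtain B where "resolvesH u B" "card B = adimH u + 1" "escapes u B"
      using in_I_escaping_set assms(2) by blast
    then show ?thesis using 1 by (intro exI[of _ B]) simp
  next
    case 2
    obtain B where "resolvesH u B" "card B = adimH u" using adimH_obtains[OF assms(1)] .
    then show ?thesis using 2 by (intro exI[of _ B]) simp
  next
    case 3
    then obtain B where "resolvesH u B" "card B = adimH u" "escapes u B"
      using not_in_I_escaping_basis[OF assms(1)] by blast
    then show ?thesis using 3 assms(2) by (intro exI[of _ B]) auto
  qed
qed

lemma ldim_upper:
  "\<exists>S. local_res dP PV PE S \<and> card S = sum adimH V + card (Iset - X) + rho_gen dG V E VE X"
proof -
  have "rho_feasible dG V E VE X X"
    unfolding rho_feasible_def
  proof (intro conjI subset_refl allI impI)
    fix ui uj assume "relR dG V E VE X ui uj"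
    then have "ui \<in> X" "E ui uj" unfolding relR_def by auto
    then show "\<exists>a\<in>X. dG a ui \<noteq> dG a uj"
      using dG_self[of ui] dG_adjacent[of ui uj] X_subset_V by (intro bexI[of _ ui]) auto
  qed
  then obtain A where A: "rho_feasible dG V E VE X A" "card A = rho_gen dG V E VE X"
    by (rule rho_gen_obtains[OF finite_X])
  let ?J = "A \<union> (Iset - X)"
  have "?J \<subseteq> Iset" using A(1) X_subset_I unfolding rho_feasible_def by blast
  define B where "B u = (SOME B. resolvesH u B \<and> card B = adimH u + (if u \<in> ?J then 1 else 0) \<and>
    (u \<notin> Iset \<or> u \<in> ?J \<longrightarrow> escapes u B))" for u
  have "fibre_selection V E HV HE X dG dP A B"
  proof (unfold_locales)
    fix u assume u: "u \<in> V"
    note B = someI_ex[OF fibre_choice_exists[OF u \<open>?J \<subseteq> Iset\<close>], folded B_def]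
    show "resolvesH u (B u)" "card (B u) = adimH u + (if u \<in> ?J then 1 else 0)" using B by blast+
    show "u \<notin> Iset \<or> u \<in> ?J \<Longrightarrow> escapes u (B u)" using B by blast
  qed (rule A(1))
  then show ?thesis using fibre_selection.Sigma_B_resolving fibre_selection.card_Sigma_B A(2) by fastforce
qed

theorem ldim_lex_eq: "ldim dP PV PE = sum adimH V + card (Iset - X) + rho_gen dG V E VE X"
proof -
  obtain S where S: "local_res dP PV PE S" "card S = sum adimH V + card (Iset - X) + rho_gen dG V E VE X"
    using ldim_upper by blast
  then obtain S' where "local_res dP PV PE S'" "card S' = ldim dP PV PE"
    using ldim_obtains[OF finite_PV] by blast
  then show ?thesis using ldim_le[OF finite_PV S(1)] ldim_lower S(2) by fastforce
qed

end

lemma lex_distances_gdist: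
  assumes "connected_graph V E" "card V \<ge> 2" "\<forall>u\<in>V. graph (HV u) (HE u)" "XE_choice V E HV HE X"
  shows "lex_distances V E HV HE X (gdist V E) (gdist (lex_V V HV) (lex_E V E HV HE))"
proof
  show G: "graph V E" using assms(1) unfolding connected_graph_def by simp
  show "\<And>x y. E x y \<Longrightarrow> gdist V E x y = 1" using gdist_graph_adjacent[OF G] .
  show "\<And>x y. gdist V E x y = gdist V E y x" by (rule gdist_commute, erule graph_sym[OF G])
  show "\<And>u u' z. cnbhd E u = cnbhd E u' \<Longrightarrow> z \<noteq> u \<Longrightarrow> z \<noteq> u' \<Longrightarrow> gdist V E z u = gdist V E z u'"
    using gdist_twin[OF G] .
  show "\<And>x. x \<in> V \<Longrightarrow> gdist V E x x = 0" using gdist_self .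
  show "\<And>z t u v. z \<in> V \<Longrightarrow> t \<in> HV z \<Longrightarrow> u \<in> V \<Longrightarrow> v \<in> HV u \<Longrightarrow>
      gdist (lex_V V HV) (lex_E V E HV HE) (z,t) (u,v) =
        (if z = u then dist2 (HV u) (HE u) t v else gdist V E z u)"
    using gdist_lex[OF assms(1-3)] .
qed (use assms in simp_all)

lemma lex_distances_dist2:
  assumes "connected_graph V E" "card V \<ge> 2" "\<forall>u\<in>V. graph (HV u) (HE u)" "XE_choice V E HV HE X"
  shows "lex_distances V E HV HE X (dist2 V E) (dist2 (lex_V V HV) (lex_E V E HV HE))"
proof -
  interpret gdist: lex_distances V E HV HE X "gdist V E" "gdist (lex_V V HV) (lex_E V E HV HE)"
    using lex_distances_gdist[OF assms] .
  show ?thesis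
  proof
    show "\<And>z t u v. z \<in> V \<Longrightarrow> t \<in> HV z \<Longrightarrow> u \<in> V \<Longrightarrow> v \<in> HV u \<Longrightarrow>
      dist2 (lex_V V HV) (lex_E V E HV HE) (z,t) (u,v) =
        (if z = u then dist2 (HV u) (HE u) t v else dist2 V E z u)"
      using gdist.dP_lex unfolding dist2_def by (simp add: min.assoc)
    show "\<And>x y. dist2 V E x y = dist2 V E y x" unfolding dist2_def using gdist.dG_commute by simp
    show "\<And>u u' z. cnbhd E u = cnbhd E u' \<Longrightarrow> z \<noteq> u \<Longrightarrow> z \<noteq> u' \<Longrightarrow> dist2 V E z u = dist2 V E z u'"
      unfolding dist2_def using gdist.dG_twin by metis
  qed (use gdist.graph_G gdist.graph_H gdist.XE gdist.dG_adjacent gdist.dG_self in \<open>auto simp: dist2_def\<close>)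
qed

theorem theorem8:
  fixes V :: "'a set" and E :: "'a \<Rightarrow> 'a \<Rightarrow> bool"
    and HV :: "'a \<Rightarrow> 'b set" and HE :: "'a \<Rightarrow> 'b \<Rightarrow> 'b \<Rightarrow> bool"
    and X :: "'a set"
  assumes "connected_graph V E"
    and "card V \<ge> 2"
    and "\<forall>u\<in>V. graph (HV u) (HE u)"
    and "XE_choice V E HV HE X"
  shows "dim_l (lex_V V HV) (lex_E V E HV HE) = adim_l (lex_V V HV) (lex_E V E HV HE)
     \<longleftrightarrow> rho V E HV HE X = rho' V E HV HE X"
proof -
  have "dim_l (lex_V V HV) (lex_E V E HV HE) =
      (\<Sum>u\<in>V. adim_l (HV u) (HE u)) + card (I_set V HV HE - X) + rho V E HV HE X"
    unfolding dim_l_def rho_def using lex_distances.ldim_lex_eq[OF lex_distances_gdist[OF assms]] .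
  moreover have "adim_l (lex_V V HV) (lex_E V E HV HE) =
      (\<Sum>u\<in>V. adim_l (HV u) (HE u)) + card (I_set V HV HE - X) + rho' V E HV HE X"
    unfolding adim_l_def[of "lex_V V HV"] rho'_def
    using lex_distances.ldim_lex_eq[OF lex_distances_dist2[OF assms]] .
  ultimately show ?thesis by simp
qed

end
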